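(* Assume $\beta<\infty$. The following hold. - (a) $1\le\sqrt{n}\,\beta$. - (b) $n\,\mathbb{E}|L_1|^q\le\beta^{q-2}$ for every $2\le q\le3$. - (c) If $\gamma<\infty$, then $|\kappa_s|\le\sqrt{\gamma_s}\le\sqrt{\gamma}$ for $s=1,\dots,k$. - (d) Let $3/2<\alpha<2$, put $\delta=(2-\alpha)/(\alpha-1)$, and let $s$ be an integer with $1\le s<\min(\delta^{-1},k)$. Then $|\kappa_s|\le\beta^{\delta s}+\gamma_s^{(\alpha)}\le\beta^{\delta s}+\gamma^{(\alpha)}$.
   Context: **Setting.** Let $k\ge1$ and $n\ge1$ be integers. Let $X,X_1,\dots,X_n$ be i.i.d. random variables. Let $l$ be a real Borel function. For $p=1,\dots,k$, let $t_p$ be a real Borel function of $p$ variables that is invariant under permutations of its arguments. Put $L_i=l(X_i)$. For $A=\{j_1,\dots,j_p\}\subset\{1,\dots,n\}$ with $|A|=p$, put $T_A=t_p(X_{j_1},\dots,X_{j_p})$, and write $T_{1\dots p}=T_{\{1,\dots,p\}}$. Define $\mathbb{T}=\sum_{p=1}^k\sum_{|A|=p}T_A$. **Standing assumptions.** - $\mathbb{E}L_1=0$ and $n\,\mathbb{E}L_1^2=1$. - Each $t_p(X_1,\dots,X_p)$ is integrable and degenerate: $\mathbb{E}[t_p(X_1,\dots,X_p)\mid X_2,\dots,X_p]=0$ a.s. For $p=1$ this means $\mathbb{E}t_1(X_1)=0$. **Notation.** - $\beta=n\,\mathbb{E}|L_1|^3$. - $\gamma_s=\binom{n}{s}\mathbb{E}T_{1\dots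 s}^2$ and $\gamma=\operatorname{var}\mathbb{T}=\sum_{s=1}^k\gamma_s$. - $\gamma_s^{(\alpha)}=\binom{n}{s}\mathbb{E}|T_{1\dots s}|^\alpha$ and $\gamma^{(\alpha)}=\sum_{s=1}^k\gamma_s^{(\alpha)}$. - $\kappa_s=\binom{n}{s}\mathbb{E}[L_1\cdots L_s\,\mathbb{T}]=\binom{n}{s}\mathbb{E}[L_1\cdots L_sT_{1\dots s}]$. *)

theory Defs
  imports "HOL-Probability.Probability"
begin

text \<open>Product law of p i.i.d. copies of a random element with law mu, indexed by {..<p}
  (coordinate j corresponds to X_(j+1)).\<close>
definition prodlaw :: "'b measure \<Rightarrow> nat \<Rightarrow> (nat \<Rightarrow> 'b) measure" where
  "prodlaw \<mu> p = PiM {..<p} (\<lambda>_. \<mu>)"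

definition coord_sigma :: "'b measure \<Rightarrow> nat \<Rightarrow> nat set \<Rightarrow> (nat \<Rightarrow> 'b) measure" where
  "coord_sigma \<mu> p J = sigma (space (prodlaw \<mu> p))
     {(\<lambda>x. x j) -` A \<inter> space (prodlaw \<mu> p) | j A. j \<in> J \<and> A \<in> sets \<mu>}"

definition T1s :: "(nat \<Rightarrow> (nat \<Rightarrow> 'b) \<Rightarrow> real) \<Rightarrow> (nat \<Rightarrow> 'a \<Rightarrow> 'b) \<Rightarrow> nat \<Rightarrow> 'a \<Rightarrow> real" where
  "T1s t X s \<omega> = t s (\<lambda>j\<in>{..<s}. X (Suc j) \<omega>)"

definition beta_c :: "'a measure \<Rightarrow> ('b \<Rightarrow> real) \<Rightarrow> (nat \<Rightarrow> 'a \<Rightarrow> 'b) \<Rightarrow> nat \<Rightarrow> real" where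
  "beta_c M l X n = real n * (\<integral>\<omega>. \<bar>l (X 1 \<omega>)\<bar> ^ 3 \<partial>M)"

definition gamma_s :: "'a measure \<Rightarrow> (nat \<Rightarrow> (nat \<Rightarrow> 'b) \<Rightarrow> real) \<Rightarrow> (nat \<Rightarrow> 'a \<Rightarrow> 'b) \<Rightarrow> nat \<Rightarrow> nat \<Rightarrow> ennreal" where
  "gamma_s M t X n s = of_nat (n choose s) * (\<integral>\<^sup>+\<omega>. ennreal ((T1s t X s \<omega>)\<^sup>2) \<partial>M)"

definition gamma_c :: "'a measure \<Rightarrow> (nat \<Rightarrow> (nat \<Rightarrow> 'b) \<Rightarrow> real) \<Rightarrow> (nat \<Rightarrow> 'a \<Rightarrow> 'b) \<Rightarrow> nat \<Rightarrow> nat \<Rightarrow> ennreal" where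
  "gamma_c M t X n k = (\<Sum>s\<in>{1..k}. gamma_s M t X n s)"

definition gamma_alpha_s :: "real \<Rightarrow> 'a measure \<Rightarrow> (nat \<Rightarrow> (nat \<Rightarrow> 'b) \<Rightarrow> real) \<Rightarrow> (nat \<Rightarrow> 'a \<Rightarrow> 'b) \<Rightarrow> nat \<Rightarrow> nat \<Rightarrow> ennreal" where
  "gamma_alpha_s \<alpha> M t X n s = of_nat (n choose s) * (\<integral>\<^sup>+\<omega>. ennreal (\<bar>T1s t X s \<omega>\<bar> powr \<alpha>) \<partial>M)"

definition gamma_alpha :: "real \<Rightarrow> 'a measure \<Rightarrow> (nat \<Rightarrow> (nat \<Rightarrow> 'b) \<Rightarrow> real) \<Rightarrow> (nat \<Rightarrow> 'a \<Rightarrow> 'b) \<Rightarrow> nat \<Rightarrow> nat \<Rightarrow> ennreal" where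
  "gamma_alpha \<alpha> M t X n k = (\<Sum>s\<in>{1..k}. gamma_alpha_s \<alpha> M t X n s)"

definition kappa_s :: "'a measure \<Rightarrow> ('b \<Rightarrow> real) \<Rightarrow> (nat \<Rightarrow> (nat \<Rightarrow> 'b) \<Rightarrow> real) \<Rightarrow> (nat \<Rightarrow> 'a \<Rightarrow> 'b) \<Rightarrow> nat \<Rightarrow> nat \<Rightarrow> real" where
  "kappa_s M l t X n s = real (n choose s) * (\<integral>\<omega>. (\<Prod>j\<in>{1..s}. l (X j \<omega>)) * T1s t X s \<omega> \<partial>M)"

end

theory Submission
  imports Defs
begin

text \<open>
  Only moment inequalities are involved.
  Parts (a) and (b) come from pointwise weighted AM-GM inequalities between \<open>L\<^sup>2\<close> and
  \<open>\<bar>L\<bar>\<^sup>3\<close>, integrated against \<open>n \<bbbE>L\<^sup>2 = 1\<close>. For (c) and (d), independence and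
  identical distribution give \<open>\<bbbE> \<Prod>\<^sub>j g(L\<^sub>j) = (\<bbbE> g(L\<^sub>1))\<^sup>s\<close>; combined with
  \<open>binomial n s \<le> n\<^sup>s\<close>, Cauchy-Schwarz yields (c), and Young's inequality with exponents
  \<open>p = \<alpha>/(\<alpha>-1) \<in> [2,3]\<close> and \<open>\<alpha>\<close> together with (b) for \<open>q = p\<close> yields (d), since \<open>p - 2 = \<delta>\<close>.
\<close>

lemma abs_integral_le_nn_integral_abs:
  fixes f :: "'a \<Rightarrow> real"
  shows "ennreal \<bar>integral\<^sup>L M f\<bar> \<le> (\<integral>\<^sup>+x. ennreal \<bar>f x\<bar> \<partial>M)"
proof (cases "integrable M f")
  case True
  then show ?thesis using integral_norm_bound_ennreal[OF True] by simp
qed (simp add: not_integrable_integral_eq)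

lemma square_le_cube_Young:
  fixes x c :: real
  assumes "x \<ge> 0" "c > 0"
  shows "x\<^sup>2 \<le> 2/3 * c * x ^ 3 + 1 / (3 * c\<^sup>2)"
proof -
  have "2 * (c * x) ^ 3 + 1 - 3 * (c * x)\<^sup>2 = (c * x - 1)\<^sup>2 * (2 * (c * x) + 1)"
    by (simp add: power2_eq_square power3_eq_cube algebra_simps)
  also have "\<dots> \<ge> 0" using assms by simp
  finally have "3 * c\<^sup>2 * x\<^sup>2 \<le> 2 * c ^ 3 * x ^ 3 + 1" by (simp add: power_mult_distrib)
  then show ?thesis using assms by (simp add: field_simps power2_eq_square power3_eq_cube)
qed

text \<open>Weighted AM-GM for \<open>x\<^sup>q = (x\<^sup>2)\<^bsup>3-q\<^esup> (x\<^sup>3)\<^bsup>q-2\<^esup>\<close>.\<close>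
lemma powr_le_interpolation_Young:
  fixes x B K q :: real
  assumes "x > 0" "B > 0" "K > 0" "2 \<le> q" "q \<le> 3"
  shows "x powr q * (K / B powr (q - 2)) \<le> (3 - q) * (K * x\<^sup>2) + (q - 2) * (K / B * x ^ 3)"
proof -
  have "(K * x\<^sup>2) powr (3 - q) * (K / B * x ^ 3) powr (q - 2) \<le> (3 - q) * (K * x\<^sup>2) + (q - 2) * (K / B * x ^ 3)"
    by (rule Youngs_inequality_0) (use assms in auto)
  moreover have "(K * x\<^sup>2) powr (3 - q) * (K / B * x ^ 3) powr (q - 2) = x powr q * (K / B powr (q - 2))"
  proof -
    have "(K * x\<^sup>2) powr (3 - q) * (K / B * x ^ 3) powr (q - 2)
        = K powr (3 - q) * (x powr 2) powr (3 - q) * (K powr (q - 2) / B powr (q - 2)) * (x powr 3) powr (q - 2)"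
      using assms by (simp add: powr_mult powr_divide powr_realpow)
    also have "\<dots> = (K powr (3 - q) * K powr (q - 2)) * (x powr (2 * (3 - q)) * x powr (3 * (q - 2))) / B powr (q - 2)"
      by (simp add: powr_powr)
    also have "\<dots> = K * x powr q / B powr (q - 2)"
      using assms by (simp add: powr_add[symmetric] algebra_simps)
    finally show ?thesis by simp
  qed
  ultimately show ?thesis by simp
qed

lemma mult_le_powr_add_powr:
  fixes a b p q :: real
  assumes "p > 1" "q > 1" "1/p + 1/q = 1" "a \<ge> 0" "b \<ge> 0"
  shows "a * b \<le> a powr p + b powr q"
proof -
  have "a * b \<le> a powr p / p + b powr q / q" by (rule Youngs_inequality) (use assms in auto)
  also have "a powr p / p \<le> a powr p"
    using assms mult_left_mono[of 1 p "a powr p"] by (simp add: divide_le_eq)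
  also have "b powr q / q \<le> b powr q"
    using assms mult_left_mono[of 1 q "b powr q"] by (simp add: divide_le_eq)
  finally show ?thesis by simp
qed

lemma abs_powr_le_square_plus_cube:
  fixes x q :: real
  assumes "2 \<le> q" "q \<le> 3"
  shows "\<bar>x\<bar> powr q \<le> x\<^sup>2 + \<bar>x\<bar> ^ 3"
proof (cases "\<bar>x\<bar> \<le> 1")
  case True
  have "\<bar>x\<bar> powr q \<le> \<bar>x\<bar> powr 2" by (rule powr_mono') (use assms True in auto)
  also have "\<dots> = x\<^sup>2" by (cases "x = 0") (auto simp: powr_realpow)
  finally show ?thesis by (simp add: add_increasing2)
next
  case False
  have "\<bar>x\<bar> powr q \<le> \<bar>x\<bar> powr 3" by (rule powr_mono) (use assms False in auto)
  also have "\<dots> = \<bar>x\<bar> ^ 3" using False by (simp add: powr_realpow)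
  finally show ?thesis by (simp add: add_increasing)
qed

lemma binomial_le_power: "real (n choose s) \<le> real n ^ s"
proof (cases "s \<le> n")
  case True
  then show ?thesis using binomial_le_pow[OF True] by (simp flip: of_nat_power)
qed (simp add: binomial_eq_0)

context prob_space
begin

lemma integrable_abs_powr_between_square_cube:
  fixes Y :: "'a \<Rightarrow> real"
  assumes [measurable]: "Y \<in> borel_measurable M"
    and "integrable M (\<lambda>\<omega>. (Y \<omega>)\<^sup>2)" "integrable M (\<lambda>\<omega>. \<bar>Y \<omega>\<bar> ^ 3)" "2 \<le> q" "q \<le> 3"
  shows "integrable M (\<lambda>\<omega>. \<bar>Y \<omega>\<bar> powr q)"
  by (rule Bochner_Integration.integrable_bound[of _ "\<lambda>\<omega>. (Y \<omega>)\<^sup>2 + \<bar>Y \<omega>\<bar> ^ 3"])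
    (use assms abs_powr_le_square_plus_cube in auto)

lemma one_le_sqrt_mult_third_moment:
  fixes Y :: "'a \<Rightarrow> real" and c :: real
  assumes c: "c > 0"
    and Y2: "integrable M (\<lambda>\<omega>. (Y \<omega>)\<^sup>2)" and Y3: "integrable M (\<lambda>\<omega>. \<bar>Y \<omega>\<bar> ^ 3)"
    and norm: "c * (\<integral>\<omega>. (Y \<omega>)\<^sup>2 \<partial>M) = 1"
  shows "1 \<le> sqrt c * (c * (\<integral>\<omega>. \<bar>Y \<omega>\<bar> ^ 3 \<partial>M))"
proof -
  define r where "r = sqrt c"
  have r: "r > 0" "r\<^sup>2 = c" using c by (auto simp: r_def)
  have "(\<integral>\<omega>. (Y \<omega>)\<^sup>2 \<partial>M) \<le> (\<integral>\<omega>. 2/3 * r * \<bar>Y \<omega>\<bar> ^ 3 + 1 / (3 * r\<^sup>2) \<partial>M)"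
    using Y2 Y3 r square_le_cube_Young[of "\<bar>Y _\<bar>" r] by (intro integral_mono) auto
  also have "\<dots> = 2/3 * r * (\<integral>\<omega>. \<bar>Y \<omega>\<bar> ^ 3 \<partial>M) + 1 / (3 * c)"
    using Y3 r by (simp add: prob_space)
  finally show ?thesis
    using norm c by (simp add: r_def field_simps)
qed

lemma moment_powr_le_third_moment_powr:
  fixes Y :: "'a \<Rightarrow> real" and c q :: real
  assumes [measurable]: "Y \<in> borel_measurable M" and c: "c > 0"
    and Y2: "integrable M (\<lambda>\<omega>. (Y \<omega>)\<^sup>2)" and Y3: "integrable M (\<lambda>\<omega>. \<bar>Y \<omega>\<bar> ^ 3)"
    and norm: "c * (\<integral>\<omega>. (Y \<omega>)\<^sup>2 \<partial>M) = 1" and q: "2 \<le> q" "q \<le> 3"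
  shows "c * (\<integral>\<omega>. \<bar>Y \<omega>\<bar> powr q \<partial>M) \<le> (c * (\<integral>\<omega>. \<bar>Y \<omega>\<bar> ^ 3 \<partial>M)) powr (q - 2)"
proof -
  define B where "B = c * (\<integral>\<omega>. \<bar>Y \<omega>\<bar> ^ 3 \<partial>M)"
  have "1 \<le> sqrt c * B"
    unfolding B_def by (rule one_le_sqrt_mult_third_moment[OF c Y2 Y3 norm])
  then have B: "B > 0"
    using c mult_nonneg_nonpos[of "sqrt c" B] by (cases "B > 0") auto
  have pointwise: "\<bar>Y \<omega>\<bar> powr q * (c / B powr (q - 2))
      \<le> (3 - q) * (c * (Y \<omega>)\<^sup>2) + (q - 2) * (c / B * \<bar>Y \<omega>\<bar> ^ 3)" for \<omega>
    using powr_le_interpolation_Young[of "\<bar>Y \<omega>\<bar>" B c q] B c q by (cases "Y \<omega> = 0") auto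
  have "(\<integral>\<omega>. \<bar>Y \<omega>\<bar> powr q * (c / B powr (q - 2)) \<partial>M)
      \<le> (\<integral>\<omega>. (3 - q) * (c * (Y \<omega>)\<^sup>2) + (q - 2) * (c / B * \<bar>Y \<omega>\<bar> ^ 3) \<partial>M)"
    using integrable_abs_powr_between_square_cube[OF _ Y2 Y3 q] Y2 Y3 pointwise
    by (intro integral_mono) auto
  also have "\<dots> = (3 - q) * (c * (\<integral>\<omega>. (Y \<omega>)\<^sup>2 \<partial>M)) + (q - 2) * (c / B * (\<integral>\<omega>. \<bar>Y \<omega>\<bar> ^ 3 \<partial>M))"
    using Y2 Y3 by simp
  also have "\<dots> = 1" using norm B by (auto simp: B_def)
  finally have "(\<integral>\<omega>. \<bar>Y \<omega>\<bar> powr q \<partial>M) * (c / B powr (q - 2)) \<le> 1" by simp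
  then show ?thesis using B by (simp add: B_def[symmetric] field_simps)
qed

lemma nn_integral_prod_iid:
  fixes f :: "'b \<Rightarrow> ennreal"
  assumes indep: "indep_vars (\<lambda>_. N) Z I"
    and ident: "\<forall>i\<in>I. distr M N (Z i) = distr M N (Z i\<^sub>0)" and i\<^sub>0: "i\<^sub>0 \<in> I"
    and J: "finite J" "J \<subseteq> I" and f: "f \<in> borel_measurable N"
  shows "(\<integral>\<^sup>+\<omega>. (\<Prod>j\<in>J. f (Z j \<omega>)) \<partial>M) = (\<integral>\<^sup>+\<omega>. f (Z i\<^sub>0 \<omega>) \<partial>M) ^ card J"
proof -
  have Zm: "Z i \<in> measurable M N" if "i \<in> I" for i
    using indep that by (auto simp: indep_vars_def)
  have "indep_vars (\<lambda>_. borel) (\<lambda>j \<omega>. f (Z j \<omega>)) J"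
    using indep_vars_compose2[OF indep_vars_subset[OF indep J(2)], of "\<lambda>_. f"] f by simp
  then have "(\<integral>\<^sup>+\<omega>. (\<Prod>j\<in>J. f (Z j \<omega>)) \<partial>M) = (\<Prod>j\<in>J. \<integral>\<^sup>+\<omega>. f (Z j \<omega>) \<partial>M)"
    by (rule indep_vars_nn_integral[OF J(1)]) simp
  also have "\<dots> = (\<Prod>j\<in>J. \<integral>\<^sup>+\<omega>. f (Z i\<^sub>0 \<omega>) \<partial>M)"
  proof (rule prod.cong)
    fix j assume "j \<in> J"
    then have j: "j \<in> I" using J by auto
    have "(\<integral>\<^sup>+\<omega>. f (Z j \<omega>) \<partial>M) = (\<integral>\<^sup>+x. f x \<partial>distr M N (Z j))"
      using Zm[OF j] f by (simp add: nn_integral_distr)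
    also have "\<dots> = (\<integral>\<^sup>+x. f x \<partial>distr M N (Z i\<^sub>0))" using ident j by simp
    also have "\<dots> = (\<integral>\<^sup>+\<omega>. f (Z i\<^sub>0 \<omega>) \<partial>M)"
      using Zm[OF i\<^sub>0] f by (simp add: nn_integral_distr)
    finally show "(\<integral>\<^sup>+\<omega>. f (Z j \<omega>) \<partial>M) = (\<integral>\<^sup>+\<omega>. f (Z i\<^sub>0 \<omega>) \<partial>M)" .
  qed simp
  finally show ?thesis by simp
qed

end

lemma gamma_s_le_gamma_c: "s \<in> {1..k} \<Longrightarrow> gamma_s M t X n s \<le> gamma_c M t X n k"
  unfolding gamma_c_def by (intro member_le_sum) auto

lemma gamma_alpha_s_le_gamma_alpha: "s \<in> {1..k} \<Longrightarrow> gamma_alpha_s \<alpha> M t X n s \<le> gamma_alpha \<alpha> M t X n k"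
  unfolding gamma_alpha_def by (intro member_le_sum) auto

locale normalized_iid_scores = prob_space M for M :: "'a measure" +
  fixes N :: "'b measure" and X :: "nat \<Rightarrow> 'a \<Rightarrow> 'b" and l :: "'b \<Rightarrow> real" and n :: nat
  assumes n_pos: "n \<ge> 1"
    and indep: "indep_vars (\<lambda>_. N) X {1..n}"
    and ident: "\<forall>i\<in>{1..n}. distr M N (X i) = distr M N (X 1)"
    and l_measurable: "l \<in> borel_measurable N"
    and square_integrable: "integrable M (\<lambda>\<omega>. (l (X 1 \<omega>))\<^sup>2)"
    and variance_normalized: "real n * (\<integral>\<omega>. (l (X 1 \<omega>))\<^sup>2 \<partial>M) = 1"
    and cube_integrable: "integrable M (\<lambda>\<omega>. \<bar>l (X 1 \<omega>)\<bar> ^ 3)"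
begin

lemma X_measurable: "i \<in> {1..n} \<Longrightarrow> X i \<in> measurable M N"
  using indep by (auto simp: indep_vars_def)

lemma score_measurable: "i \<in> {1..n} \<Longrightarrow> (\<lambda>\<omega>. l (X i \<omega>)) \<in> borel_measurable M"
  using X_measurable l_measurable by measurable

lemma first_score_measurable[measurable]: "(\<lambda>\<omega>. l (X 1 \<omega>)) \<in> borel_measurable M"
  using score_measurable n_pos by simp

lemma one_le_sqrt_mult_beta: "1 \<le> sqrt (real n) * beta_c M l X n"
  unfolding beta_c_def using n_pos square_integrable cube_integrable variance_normalized
  by (intro one_le_sqrt_mult_third_moment) auto

lemma beta_pos: "beta_c M l X n > 0"
  using one_le_sqrt_mult_beta mult_nonneg_nonpos[of "sqrt (real n)" "beta_c M l X n"]
  by (cases "beta_c M l X n > 0") auto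

lemma moment_powr_le_beta_powr:
  assumes "2 \<le> q" "q \<le> 3"
  shows "real n * (\<integral>\<omega>. \<bar>l (X 1 \<omega>)\<bar> powr q \<partial>M) \<le> beta_c M l X n powr (q - 2)"
  unfolding beta_c_def
  using moment_powr_le_third_moment_powr[OF first_score_measurable _ square_integrable
      cube_integrable variance_normalized assms] n_pos
  by simp

lemma nn_integral_prod_scores:
  fixes g :: "real \<Rightarrow> real"
  assumes "g \<in> borel_measurable borel" "\<And>x. g x \<ge> 0" "s \<le> n"
  shows "(\<integral>\<^sup>+\<omega>. ennreal (\<Prod>j\<in>{1..s}. g (l (X j \<omega>))) \<partial>M)
       = (\<integral>\<^sup>+\<omega>. ennreal (g (l (X 1 \<omega>))) \<partial>M) ^ s"
proof -
  have "(\<lambda>x. ennreal (g (l x))) \<in> borel_measurable N"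
    using assms(1) l_measurable by measurable
  then have "(\<integral>\<^sup>+\<omega>. (\<Prod>j\<in>{1..s}. ennreal (g (l (X j \<omega>)))) \<partial>M)
      = (\<integral>\<^sup>+\<omega>. ennreal (g (l (X 1 \<omega>))) \<partial>M) ^ card {1..s}"
    using n_pos assms(3) by (intro nn_integral_prod_iid[OF indep ident]) auto
  then show ?thesis using assms(2) by (simp add: prod_ennreal)
qed

lemma T1s_measurable:
  assumes "t s \<in> borel_measurable (PiM {..<s} (\<lambda>_. N))" "s \<le> n"
  shows "T1s t X s \<in> borel_measurable M"
proof -
  have "(\<lambda>\<omega>. \<lambda>j\<in>{..<s}. X (Suc j) \<omega>) \<in> measurable M (PiM {..<s} (\<lambda>_. N))"
    using assms(2) by (intro measurable_restrict X_measurable) auto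
  from measurable_compose[OF this assms(1)] show ?thesis
    by (simp add: T1s_def[abs_def])
qed

lemma prod_scores_measurable[measurable]:
  "s \<le> n \<Longrightarrow> (\<lambda>\<omega>. \<Prod>j\<in>{1..s}. l (X j \<omega>)) \<in> borel_measurable M"
  by (intro borel_measurable_prod score_measurable) auto

lemma nn_integral_prod_scores_square:
  assumes "s \<le> n"
  shows "(\<integral>\<^sup>+\<omega>. ennreal ((\<Prod>j\<in>{1..s}. l (X j \<omega>))\<^sup>2) \<partial>M) = ennreal ((1 / real n) ^ s)"
proof -
  have "(\<integral>\<^sup>+\<omega>. ennreal ((l (X 1 \<omega>))\<^sup>2) \<partial>M) = ennreal (\<integral>\<omega>. (l (X 1 \<omega>))\<^sup>2 \<partial>M)"
    using square_integrable by (intro nn_integral_eq_integral) auto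
  also have "\<dots> = ennreal (1 / real n)"
    using variance_normalized n_pos by (simp add: field_simps)
  finally show ?thesis
    using nn_integral_prod_scores[of "\<lambda>x. x\<^sup>2", OF _ _ assms]
    by (simp add: power2_eq_square prod.distrib ennreal_power)
qed

lemma nn_integral_prod_abs_scores_powr:
  assumes "s \<le> n" "2 \<le> p" "p \<le> 3"
  shows "(\<integral>\<^sup>+\<omega>. ennreal (\<bar>\<Prod>j\<in>{1..s}. l (X j \<omega>)\<bar> powr p) \<partial>M)
       = ennreal ((\<integral>\<omega>. \<bar>l (X 1 \<omega>)\<bar> powr p \<partial>M) ^ s)"
proof -
  have "(\<integral>\<^sup>+\<omega>. ennreal (\<bar>l (X 1 \<omega>)\<bar> powr p) \<partial>M) = ennreal (\<integral>\<omega>. \<bar>l (X 1 \<omega>)\<bar> powr p \<partial>M)"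
    using integrable_abs_powr_between_square_cube[OF first_score_measurable
        square_integrable cube_integrable assms(2,3)]
    by (intro nn_integral_eq_integral) auto
  then show ?thesis
    using nn_integral_prod_scores[of "\<lambda>x. \<bar>x\<bar> powr p", OF _ _ assms(1)]
    by (simp add: abs_prod prod_powr_distrib ennreal_power)
qed

lemma sq_binomial_integral_prod_scores_le:
  assumes s: "s \<le> n" and [measurable]: "T \<in> borel_measurable M"
  shows "(ennreal (real (n choose s) * \<bar>\<integral>\<omega>. (\<Prod>j\<in>{1..s}. l (X j \<omega>)) * T \<omega> \<partial>M\<bar>))\<^sup>2
     \<le> ennreal (real (n choose s)) * (\<integral>\<^sup>+\<omega>. ennreal ((T \<omega>)\<^sup>2) \<partial>M)"
proof -
  define C where "C = real (n choose s)"
  define P where "P = (\<lambda>\<omega>. \<Prod>j\<in>{1..s}. l (X j \<omega>))"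
  have [measurable]: "P \<in> borel_measurable M" unfolding P_def using s by measurable
  have "(ennreal \<bar>\<integral>\<omega>. P \<omega> * T \<omega> \<partial>M\<bar>)\<^sup>2 \<le> (\<integral>\<^sup>+\<omega>. ennreal \<bar>P \<omega>\<bar> * ennreal \<bar>T \<omega>\<bar> \<partial>M)\<^sup>2"
    using abs_integral_le_nn_integral_abs[of M "\<lambda>\<omega>. P \<omega> * T \<omega>"]
    by (intro power_mono) (auto simp: abs_mult ennreal_mult)
  also have "\<dots> \<le> (\<integral>\<^sup>+\<omega>. ennreal \<bar>P \<omega>\<bar> ^ 2 \<partial>M) * (\<integral>\<^sup>+\<omega>. ennreal \<bar>T \<omega>\<bar> ^ 2 \<partial>M)"
    by (rule Cauchy_Schwarz_nn_integral) measurable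
  also have "\<dots> = ennreal ((1 / real n) ^ s) * (\<integral>\<^sup>+\<omega>. ennreal ((T \<omega>)\<^sup>2) \<partial>M)"
    using nn_integral_prod_scores_square[OF s] by (simp add: P_def ennreal_power power2_abs)
  finally have CS: "(ennreal \<bar>\<integral>\<omega>. P \<omega> * T \<omega> \<partial>M\<bar>)\<^sup>2
      \<le> ennreal ((1 / real n) ^ s) * (\<integral>\<^sup>+\<omega>. ennreal ((T \<omega>)\<^sup>2) \<partial>M)" .
  have "C / real n ^ s \<le> 1"
    using binomial_le_power[of n s] n_pos by (simp add: C_def)
  then have C: "C\<^sup>2 * (1 / real n) ^ s \<le> C"
    using mult_left_le[of "C / real n ^ s" C] by (simp add: C_def power2_eq_square power_one_over)
  have "(ennreal (C * \<bar>\<integral>\<omega>. P \<omega> * T \<omega> \<partial>M\<bar>))\<^sup>2 = ennreal (C\<^sup>2) * (ennreal \<bar>\<integral>\<omega>. P \<omega> * T \<omega> \<partial>M\<bar>)\<^sup>2"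
    by (simp add: C_def ennreal_mult ennreal_power power_mult_distrib)
  also have "\<dots> \<le> ennreal (C\<^sup>2 * (1 / real n) ^ s) * (\<integral>\<^sup>+\<omega>. ennreal ((T \<omega>)\<^sup>2) \<partial>M)"
    using mult_left_mono[OF CS] by (simp add: ennreal_mult mult.assoc)
  also have "\<dots> \<le> ennreal C * (\<integral>\<^sup>+\<omega>. ennreal ((T \<omega>)\<^sup>2) \<partial>M)"
    using C by (intro mult_right_mono ennreal_leI) auto
  finally show ?thesis unfolding C_def P_def .
qed

lemma abs_kappa_le_sqrt_gamma_s:
  assumes "t s \<in> borel_measurable (PiM {..<s} (\<lambda>_. N))" "gamma_s M t X n s < \<infinity>"
  shows "\<bar>kappa_s M l t X n s\<bar> \<le> sqrt (enn2real (gamma_s M t X n s))"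
proof (cases "s \<le> n")
  case True
  have "ennreal (\<bar>kappa_s M l t X n s\<bar>\<^sup>2) \<le> gamma_s M t X n s"
    using sq_binomial_integral_prod_scores_le[OF True T1s_measurable[of t s, OF assms(1) True]]
    by (simp add: kappa_s_def gamma_s_def abs_mult ennreal_power ennreal_of_nat_eq_real_of_nat)
  also have "\<dots> = ennreal (enn2real (gamma_s M t X n s))"
    using assms(2) by simp
  finally show ?thesis
    by (intro real_le_rsqrt) (simp add: ennreal_le_iff)
qed (simp add: kappa_s_def binomial_eq_0)

lemma binomial_mult_moment_power_le_beta_powr:
  assumes "2 \<le> p" "p \<le> 3"
  shows "real (n choose s) * (\<integral>\<omega>. \<bar>l (X 1 \<omega>)\<bar> powr p \<partial>M) ^ s \<le> beta_c M l X n powr ((p - 2) * real s)"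
proof -
  define m where "m = (\<integral>\<omega>. \<bar>l (X 1 \<omega>)\<bar> powr p \<partial>M)"
  have m: "m \<ge> 0" by (simp add: m_def)
  have "real (n choose s) * m ^ s \<le> (real n * m) ^ s"
    using binomial_le_power[of n s] m by (simp add: power_mult_distrib mult_right_mono)
  also have "\<dots> \<le> (beta_c M l X n powr (p - 2)) ^ s"
    using moment_powr_le_beta_powr[OF assms] m n_pos by (intro power_mono) (auto simp: m_def)
  also have "\<dots> = beta_c M l X n powr ((p - 2) * real s)"
    using beta_pos by (simp add: powr_power mult.commute)
  finally show ?thesis by (simp add: m_def)
qed

lemma binomial_integral_prod_scores_le_Young:
  assumes s: "s \<le> n" and [measurable]: "T \<in> borel_measurable M" and \<alpha>: "3/2 < \<alpha>" "\<alpha> < 2"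
  shows "ennreal (real (n choose s) * \<bar>\<integral>\<omega>. (\<Prod>j\<in>{1..s}. l (X j \<omega>)) * T \<omega> \<partial>M\<bar>)
     \<le> ennreal (beta_c M l X n powr ((2 - \<alpha>) / (\<alpha> - 1) * real s))
       + ennreal (real (n choose s)) * (\<integral>\<^sup>+\<omega>. ennreal (\<bar>T \<omega>\<bar> powr \<alpha>) \<partial>M)"
proof -
  define C where "C = real (n choose s)"
  define P where "P = (\<lambda>\<omega>. \<Prod>j\<in>{1..s}. l (X j \<omega>))"
  have [measurable]: "P \<in> borel_measurable M" unfolding P_def using s by measurable
  define p where "p = \<alpha> / (\<alpha> - 1)"
  have p: "p > 1" "2 \<le> p" "p \<le> 3" "1/p + 1/\<alpha> = 1" "(2 - \<alpha>) / (\<alpha> - 1) = p - 2"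
    using \<alpha> by (auto simp: p_def field_simps)
  have "ennreal \<bar>\<integral>\<omega>. P \<omega> * T \<omega> \<partial>M\<bar> \<le> (\<integral>\<^sup>+\<omega>. ennreal \<bar>P \<omega> * T \<omega>\<bar> \<partial>M)"
    by (rule abs_integral_le_nn_integral_abs)
  also have "\<dots> \<le> (\<integral>\<^sup>+\<omega>. ennreal (\<bar>P \<omega>\<bar> powr p) + ennreal (\<bar>T \<omega>\<bar> powr \<alpha>) \<partial>M)"
    using mult_le_powr_add_powr[of p \<alpha> "\<bar>P _\<bar>" "\<bar>T _\<bar>"] p \<alpha>
    by (intro nn_integral_mono) (simp add: abs_mult flip: ennreal_plus)
  also have "\<dots> = (\<integral>\<^sup>+\<omega>. ennreal (\<bar>P \<omega>\<bar> powr p) \<partial>M) + (\<integral>\<^sup>+\<omega>. ennreal (\<bar>T \<omega>\<bar> powr \<alpha>) \<partial>M)"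
    by (rule nn_integral_add) measurable
  also have "(\<integral>\<^sup>+\<omega>. ennreal (\<bar>P \<omega>\<bar> powr p) \<partial>M) = ennreal ((\<integral>\<omega>. \<bar>l (X 1 \<omega>)\<bar> powr p \<partial>M) ^ s)"
    unfolding P_def by (rule nn_integral_prod_abs_scores_powr[OF s p(2,3)])
  finally have Young: "ennreal \<bar>\<integral>\<omega>. P \<omega> * T \<omega> \<partial>M\<bar>
      \<le> ennreal ((\<integral>\<omega>. \<bar>l (X 1 \<omega>)\<bar> powr p \<partial>M) ^ s) + (\<integral>\<^sup>+\<omega>. ennreal (\<bar>T \<omega>\<bar> powr \<alpha>) \<partial>M)" .
  have "ennreal (C * \<bar>\<integral>\<omega>. P \<omega> * T \<omega> \<partial>M\<bar>) = ennreal C * ennreal \<bar>\<integral>\<omega>. P \<omega> * T \<omega> \<partial>M\<bar>"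
    by (simp add: C_def ennreal_mult)
  also have "\<dots> \<le> ennreal C * (ennreal ((\<integral>\<omega>. \<bar>l (X 1 \<omega>)\<bar> powr p \<partial>M) ^ s) + (\<integral>\<^sup>+\<omega>. ennreal (\<bar>T \<omega>\<bar> powr \<alpha>) \<partial>M))"
    by (intro mult_left_mono Young) auto
  also have "\<dots> = ennreal (C * (\<integral>\<omega>. \<bar>l (X 1 \<omega>)\<bar> powr p \<partial>M) ^ s) + ennreal C * (\<integral>\<^sup>+\<omega>. ennreal (\<bar>T \<omega>\<bar> powr \<alpha>) \<partial>M)"
    by (simp add: C_def distrib_left ennreal_mult)
  also have "\<dots> \<le> ennreal (beta_c M l X n powr ((p - 2) * real s)) + ennreal C * (\<integral>\<^sup>+\<omega>. ennreal (\<bar>T \<omega>\<bar> powr \<alpha>) \<partial>M)"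
    using binomial_mult_moment_power_le_beta_powr[OF p(2,3)]
    by (intro add_right_mono ennreal_leI) (simp add: C_def)
  finally show ?thesis unfolding C_def P_def p(5) .
qed

lemma kappa_le_beta_powr_plus_gamma_alpha_s:
  assumes "t s \<in> borel_measurable (PiM {..<s} (\<lambda>_. N))" "3/2 < \<alpha>" "\<alpha> < 2"
  shows "ennreal \<bar>kappa_s M l t X n s\<bar>
    \<le> ennreal (beta_c M l X n powr ((2 - \<alpha>) / (\<alpha> - 1) * real s)) + gamma_alpha_s \<alpha> M t X n s"
proof (cases "s \<le> n")
  case True
  show ?thesis
    using binomial_integral_prod_scores_le_Young[OF True T1s_measurable[of t s, OF assms(1) True] assms(2,3)]
    by (simp add: kappa_s_def gamma_alpha_s_def abs_mult ennreal_of_nat_eq_real_of_nat)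
qed (simp add: kappa_s_def binomial_eq_0)
end


theorem lemma1:
  fixes M :: "'a measure" and N :: "'b measure"
    and X :: "nat \<Rightarrow> 'a \<Rightarrow> 'b" and l :: "'b \<Rightarrow> real"
    and t :: "nat \<Rightarrow> (nat \<Rightarrow> 'b) \<Rightarrow> real" and n k :: nat
  assumes P: "prob_space M"
    and k: "k \<ge> 1" and n: "n \<ge> 1"
    and Xmeas: "\<forall>i\<in>{1..n}. X i \<in> measurable M N"
    and Xindep: "prob_space.indep_vars M (\<lambda>_. N) X {1..n}"
    and Xid: "\<forall>i\<in>{1..n}. distr M N (X i) = distr M N (X 1)"
    and lmeas: "l \<in> borel_measurable N"
    and L_int: "integrable M (\<lambda>\<omega>. l (X 1 \<omega>))"
    and L_mean: "(\<integral>\<omega>. l (X 1 \<omega>) \<partial>M) = 0"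
    and L2_int: "integrable M (\<lambda>\<omega>. (l (X 1 \<omega>))\<^sup>2)"
    and L2: "real n * (\<integral>\<omega>. (l (X 1 \<omega>))\<^sup>2 \<partial>M) = 1"
    and tmeas: "\<forall>p\<in>{1..k}. t p \<in> borel_measurable (PiM {..<p} (\<lambda>_. N))"
    and tsym: "\<forall>p\<in>{1..k}. \<forall>x\<in>space (PiM {..<p} (\<lambda>_. N)). \<forall>\<pi>.
                 \<pi> permutes {..<p} \<longrightarrow> t p (x \<circ> \<pi>) = t p x"
    and tint: "\<forall>p\<in>{1..k}. integrable (prodlaw (distr M N (X 1)) p) (t p)"
    and tdeg: "\<forall>p\<in>{1..k}. AE x in prodlaw (distr M N (X 1)) p.
                 real_cond_exp (prodlaw (distr M N (X 1)) p)
                   (coord_sigma (distr M N (X 1)) p {1..<p}) (t p) x = 0"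
    and beta_fin: "integrable M (\<lambda>\<omega>. \<bar>l (X 1 \<omega>)\<bar> ^ 3)"
  shows "1 \<le> sqrt (real n) * beta_c M l X n
    \<and> (\<forall>q::real. 2 \<le> q \<and> q \<le> 3 \<longrightarrow>
         real n * (\<integral>\<omega>. \<bar>l (X 1 \<omega>)\<bar> powr q \<partial>M) \<le> beta_c M l X n powr (q - 2))
    \<and> (gamma_c M t X n k < \<infinity> \<longrightarrow>
         (\<forall>s\<in>{1..k}. \<bar>kappa_s M l t X n s\<bar> \<le> sqrt (enn2real (gamma_s M t X n s))
                    \<and> sqrt (enn2real (gamma_s M t X n s)) \<le> sqrt (enn2real (gamma_c M t X n k))))
    \<and> (\<forall>(\<alpha>::real) (s::nat). 3/2 < \<alpha> \<and> \<alpha> < 2 \<and> 1 \<le> s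
         \<and> real s < min (1 / ((2 - \<alpha>) / (\<alpha> - 1))) (real k) \<longrightarrow>
         ennreal \<bar>kappa_s M l t X n s\<bar>
           \<le> ennreal (beta_c M l X n powr (((2 - \<alpha>) / (\<alpha> - 1)) * real s)) + gamma_alpha_s \<alpha> M t X n s
         \<and> ennreal (beta_c M l X n powr (((2 - \<alpha>) / (\<alpha> - 1)) * real s)) + gamma_alpha_s \<alpha> M t X n s
           \<le> ennreal (beta_c M l X n powr (((2 - \<alpha>) / (\<alpha> - 1)) * real s)) + gamma_alpha \<alpha> M t X n k)"
proof -
  interpret normalized_iid_scores M N X l n
    by (intro normalized_iid_scores.intro normalized_iid_scores_axioms.intro)
      (fact P n Xindep Xid lmeas L2_int L2 beta_fin)+
  have tm: "t s \<in> borel_measurable (PiM {..<s} (\<lambda>_. N))" if "s \<in> {1..k}" for s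
    using tmeas that by blast
  have c: "\<bar>kappa_s M l t X n s\<bar> \<le> sqrt (enn2real (gamma_s M t X n s))
      \<and> sqrt (enn2real (gamma_s M t X n s)) \<le> sqrt (enn2real (gamma_c M t X n k))"
    if fin: "gamma_c M t X n k < \<infinity>" and s: "s \<in> {1..k}" for s
  proof
    show "\<bar>kappa_s M l t X n s\<bar> \<le> sqrt (enn2real (gamma_s M t X n s))"
      using abs_kappa_le_sqrt_gamma_s[of t s, OF tm[OF s] le_less_trans[OF gamma_s_le_gamma_c[OF s] fin]] .
    show "sqrt (enn2real (gamma_s M t X n s)) \<le> sqrt (enn2real (gamma_c M t X n k))"
      using enn2real_mono[OF gamma_s_le_gamma_c[OF s]] fin by simp
  qed
  have d: "ennreal \<bar>kappa_s M l t X n s\<bar>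
      \<le> ennreal (beta_c M l X n powr ((2 - \<alpha>) / (\<alpha> - 1) * real s)) + gamma_alpha_s \<alpha> M t X n s"
    if "3/2 < \<alpha>" "\<alpha> < 2" "s \<in> {1..k}" for \<alpha> s
    using kappa_le_beta_powr_plus_gamma_alpha_s[of t s, OF tm[OF that(3)] that(1,2)] .
  have s_range: "s \<in> {1..k}" if "1 \<le> s \<and> real s < min a (real k)" for s :: nat and a :: real
    using that by auto
  show ?thesis
    using one_le_sqrt_mult_beta moment_powr_le_beta_powr c d s_range gamma_alpha_s_le_gamma_alpha
    by (blast intro: add_left_mono)
qed

end
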